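(* Let $n\ge1$ and let $F$ be an o-polynomial over $\mathbb{F}_{2^n}$. Then for every $b\in\mathbb{F}_{2^n}^*$, $$\sum_{v\in\mathbb{F}_{2^n}} W_F^2(bv,v)=2^{2n+1}.$$
   Context: $tr_n$ denotes the absolute trace from $\mathbb{F}_{2^n}$ to $\mathbb{F}_2$, $\mathbb{F}_{2^n}^*=\mathbb{F}_{2^n}\setminus\{0\}$, and $W_F(u,v)=\sum_{x\in\mathbb{F}_{2^n}}(-1)^{tr_n(vF(x))+tr_n(ux)}$. In $PG(2,2^n)$, a hyperoval is a set of $2^n+2$ points no three of which lie on a common line. A function (polynomial) $F$ over $\mathbb{F}_{2^n}$ is an o-polynomial if $\{(1,t,F(t)) : t\in\mathbb{F}_{2^n}\}\cup\{(0,1,0),(0,0,1)\}$ is a hyperoval of $PG(2,2^n)$. Equivalently (known fact), $F$ is an o-polynomial iff $F$ is a permutation and, for each $s\in\mathbb{F}_{2^n}$, the map $F_s$ defined by $F_s(t)=(F(t+s)+F(s))/t$ for $t\ne0$ and $F_s(0)=0$ is a permutation of $\mathbb{F}_{2^n}$. *)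

theory Defs
  imports Main
begin

text \<open>Absolute trace from GF(2^n) to GF(2), viewed inside the field.\<close>
definition tr :: "nat \<Rightarrow> 'a::field \<Rightarrow> 'a" where
  "tr n x = (\<Sum>i<n. x ^ (2 ^ i))"

text \<open>(-1)^y for y in the prime field GF(2) = {0,1}.\<close>
definition neg1_pow :: "'a::field \<Rightarrow> int" where
  "neg1_pow y = (if y = 0 then 1 else -1)"

definition walsh :: "nat \<Rightarrow> ('a::{field,finite} \<Rightarrow> 'a) \<Rightarrow> 'a \<Rightarrow> 'a \<Rightarrow> int" where
  "walsh n F u v = (\<Sum>x\<in>UNIV. neg1_pow (tr n (v * F x) + tr n (u * x)))"

text \<open>Projective plane PG(2,q): points are nonzero vectors of the field cubed up to
  nonzero scalars; three points are collinear iff the determinant of their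
  coordinate vectors vanishes.\<close>
definition proj_eq :: "'a::field \<times> 'a \<times> 'a \<Rightarrow> 'a \<times> 'a \<times> 'a \<Rightarrow> bool" where
  "proj_eq p q = (\<exists>c. c \<noteq> 0 \<and> p = (c * fst q, c * fst (snd q), c * snd (snd q)))"

definition det3 :: "'a::field \<times> 'a \<times> 'a \<Rightarrow> 'a \<times> 'a \<times> 'a \<Rightarrow> 'a \<times> 'a \<times> 'a \<Rightarrow> 'a" where
  "det3 p q r = (case p of (a1,a2,a3) \<Rightarrow> case q of (b1,b2,b3) \<Rightarrow> case r of (c1,c2,c3) \<Rightarrow>
      a1*(b2*c3 - b3*c2) - a2*(b1*c3 - b3*c1) + a3*(b1*c2 - b2*c1))"

definition hyperoval :: "('a::{field,finite} \<times> 'a \<times> 'a) set \<Rightarrow> bool" where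
  "hyperoval S \<longleftrightarrow>
     (\<forall>p\<in>S. p \<noteq> (0,0,0)) \<and>
     (\<forall>p\<in>S. \<forall>q\<in>S. p \<noteq> q \<longrightarrow> \<not> proj_eq p q) \<and>
     card S = card (UNIV :: 'a set) + 2 \<and>
     (\<forall>p\<in>S. \<forall>q\<in>S. \<forall>r\<in>S. p \<noteq> q \<and> p \<noteq> r \<and> q \<noteq> r \<longrightarrow> det3 p q r \<noteq> 0)"

definition o_polynomial :: "('a::{field,finite} \<Rightarrow> 'a) \<Rightarrow> bool" where
  "o_polynomial F \<longleftrightarrow>
     hyperoval ((\<lambda>t. (1, t, F t)) ` UNIV \<union> {(0,1,0), (0,0,1)})"

end

theory Submission
  imports Defs "HOL-Computational_Algebra.Polynomial"
begin

text \<open>Write \<open>\<chi>(z) = (-1)^{tr z}\<close>, an additive character of the field, and \<open>D t = F t + b t\<close>.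
  Then \<open>W_F(bv,v) = \<Sum>\<^sub>x \<chi>(v D x)\<close>, and expanding the square and summing over \<open>v\<close> with
  the orthogonality of \<open>\<chi>\<close> gives \<open>\<Sum>\<^sub>v W_F(bv,v)\<^sup>2 = 2\<^sup>n \<cdot> #{(x,y). D x = D y}\<close>.
  Since no three points of the hyperoval are collinear, the slopes \<open>(F y - F x)/(y - x)\<close>
  of the secants through \<open>(1,x,F x)\<close> are distinct and nonzero, hence take every nonzero
  value exactly once; so \<open>D\<close> is two-to-one and there are \<open>2 \<cdot> 2\<^sup>n\<close> collisions.\<close>

subsection \<open>Fields of characteristic two\<close>

lemma one_plus_one_eq_zero_if_card_power_two:
  assumes "n \<ge> 1" and "card (UNIV :: 'a::{field,finite} set) = 2 ^ n"
  shows "(1::'a) + 1 = 0"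
proof -
  have "(\<Sum>x\<in>(UNIV::'a set). x + 1) = (\<Sum>x\<in>UNIV. x)"
    by (rule sum.reindex_bij_witness[of _ "\<lambda>x. x - 1" "\<lambda>x. x + 1"]) auto
  hence "(of_nat (2 ^ n) :: 'a) = 0"
    using assms(2) by (simp add: sum.distrib)
  hence "((1::'a) + 1) ^ n = 0" by simp
  thus ?thesis by simp
qed

lemma add_self_eq_zero_char2:
  assumes "(1::'a::field) + 1 = 0"
  shows "(a::'a) + a = 0"
  using assms by (metis distrib_left mult_1_right mult_zero_right)

lemma diff_eq_add_char2:
  assumes "(1::'a::field) + 1 = 0"
  shows "(a::'a) - b = a + b"
proof -
  have "a - b = a + b - (b + b)" by simp
  then show ?thesis using add_self_eq_zero_char2[OF assms, of b] by simp
qed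

lemma add_eq_0_iff_char2:
  assumes "(1::'a::field) + 1 = 0"
  shows "(a::'a) + b = 0 \<longleftrightarrow> a = b"
  using diff_eq_add_char2[OF assms, of a b] by (metis eq_iff_diff_eq_0)

lemma power_two_power_add_char2:
  assumes "(1::'a::field) + 1 = 0"
  shows "((x::'a) + y) ^ (2 ^ i) = x ^ (2 ^ i) + y ^ (2 ^ i)"
proof (induction i)
  case 0
  show ?case by simp
next
  case (Suc i)
  have square_add: "(a + b)\<^sup>2 = a\<^sup>2 + b\<^sup>2" for a b :: 'a
    using add_self_eq_zero_char2[OF assms, of "a * b"]
    by (simp add: power2_eq_square algebra_simps)
  have "(x + y) ^ (2 ^ Suc i) = ((x + y) ^ (2 ^ i))\<^sup>2"
    by (simp add: power_mult[symmetric] mult.commute)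
  also have "\<dots> = (x ^ (2 ^ i))\<^sup>2 + (y ^ (2 ^ i))\<^sup>2"
    using Suc square_add by simp
  also have "\<dots> = x ^ (2 ^ Suc i) + y ^ (2 ^ Suc i)"
    by (simp add: power_mult[symmetric] mult.commute)
  finally show ?case .
qed

lemma sum_power2_char2:
  assumes "(1::'a::field) + 1 = 0"
  shows "(\<Sum>i\<in>A. (f i :: 'a))\<^sup>2 = (\<Sum>i\<in>A. (f i)\<^sup>2)"
proof (induction A rule: infinite_finite_induct)
  case (insert x A)
  then show ?case
    using power_two_power_add_char2[OF assms, of "f x" "sum f A" 1] by simp
qed auto

lemma power_card_UNIV_eq:
  "(x::'a::{field,finite}) ^ card (UNIV :: 'a set) = x"
proof (cases "x = 0")
  case True
  then show ?thesis by (simp add: finite_UNIV_card_ge_0 power_0_left)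
next
  case False
  let ?U = "{y::'a. y \<noteq> 0}"
  have "x ^ card ?U * (\<Prod>y\<in>?U. y) = (\<Prod>y\<in>?U. x * y)"
    by (simp add: prod.distrib)
  also have "\<dots> = (\<Prod>y\<in>?U. y)"
    by (rule prod.reindex_bij_witness[of _ "\<lambda>y. y / x" "\<lambda>y. x * y"]) (use False in auto)
  finally have "x ^ card ?U = 1" by simp
  moreover have "card ?U = card (UNIV :: 'a set) - 1"
    using card_Diff_singleton[of 0 "UNIV :: 'a set"] by (simp add: Compl_eq_Diff_UNIV[symmetric] Collect_neg_eq)
  moreover have "card (UNIV :: 'a set) > 0" by (simp add: finite_UNIV_card_ge_0)
  ultimately show ?thesis by (cases "card (UNIV :: 'a set)") auto
qed

subsection \<open>The absolute trace\<close>

lemma tr_add_char2: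
  assumes "(1::'a::field) + 1 = 0"
  shows "tr n ((x::'a) + y) = tr n x + tr n y"
  unfolding tr_def by (simp add: power_two_power_add_char2[OF assms] sum.distrib)

lemma tr_square:
  assumes "n \<ge> 1" and "card (UNIV :: 'a::{field,finite} set) = 2 ^ n"
  shows "(tr n (x::'a))\<^sup>2 = tr n x"
proof -
  let ?f = "\<lambda>i. x ^ (2 ^ i)"
  have "(tr n x)\<^sup>2 = (\<Sum>i<n. (?f i)\<^sup>2)"
    unfolding tr_def by (rule sum_power2_char2[OF one_plus_one_eq_zero_if_card_power_two[OF assms]])
  also have "\<dots> = (\<Sum>i<n. ?f (Suc i))"
    by (simp add: power_mult[symmetric] mult.commute)
  also have "\<dots> = (\<Sum>i<n. ?f i)"
    using sum.lessThan_Suc_shift[of ?f n] power_card_UNIV_eq[of x] assms(2) by simp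
  finally show ?thesis unfolding tr_def .
qed

lemma tr_eq_0_or_1:
  assumes "n \<ge> 1" and "card (UNIV :: 'a::{field,finite} set) = 2 ^ n"
  shows "tr n (x::'a) = 0 \<or> tr n x = 1"
proof -
  have "tr n x * (tr n x - 1) = 0"
    using tr_square[OF assms, of x] by (simp add: power2_eq_square algebra_simps)
  thus ?thesis by simp
qed

text \<open>The trace is a nonzero polynomial of degree \<open>2\<^sup>n\<^sup>-\<^sup>1\<close>, so it cannot vanish on all \<open>2\<^sup>n\<close> elements.\<close>
lemma tr_not_identically_zero:
  assumes "n \<ge> 1" and "card (UNIV :: 'a::{field,finite} set) = 2 ^ n"
  shows "\<exists>u::'a. tr n u \<noteq> 0"
proof (rule ccontr)
  assume "\<not> (\<exists>u::'a. tr n u \<noteq> 0)"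
  define p :: "'a poly" where "p = (\<Sum>i<n. monom 1 (2 ^ i))"
  have roots: "{x. poly p x = 0} = UNIV"
    using \<open>\<not> (\<exists>u. tr n u \<noteq> 0)\<close> unfolding p_def tr_def by (simp add: poly_sum poly_monom)
  have "coeff p (2 ^ (n - 1)) = (\<Sum>i<n. if i = n - 1 then 1 else 0)"
    unfolding p_def coeff_sum coeff_monom by (rule sum.cong) auto
  also have "\<dots> = 1"
    using assms(1) by simp
  finally have "p \<noteq> 0" by auto
  have "(2::nat) ^ n = card {x. poly p x = 0}"
    using roots assms(2) by simp
  also have "\<dots> \<le> degree p"
    by (rule card_poly_roots_bound[OF \<open>p \<noteq> 0\<close>])
  also have "\<dots> \<le> 2 ^ (n - 1)"
    unfolding p_def
  proof (rule degree_sum_le)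
    fix i assume "i \<in> {..<n}"
    hence "(2::nat) ^ i \<le> 2 ^ (n - 1)" by (intro power_increasing) auto
    thus "degree (monom (1::'a) (2 ^ i)) \<le> 2 ^ (n - 1)"
      using degree_monom_le order_trans by blast
  qed auto
  also have "\<dots> < 2 ^ n"
    using assms(1) by simp
  finally show False by simp
qed

subsection \<open>The canonical additive character\<close>

lemma sum_UNIV_mult_right_shift:
  fixes c :: "'a::{field,finite}" and g :: "'a \<Rightarrow> 'b::comm_monoid_add"
  assumes "c \<noteq> 0"
  shows "(\<Sum>v\<in>UNIV. g (v * c)) = (\<Sum>u\<in>UNIV. g u)"
  by (rule sum.reindex_bij_witness[where i = "\<lambda>u. u / c" and j = "\<lambda>v. v * c"]) (use assms in auto)

lemma sum_UNIV_add_right_shift: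
  fixes c :: "'a::{ab_group_add,finite}" and g :: "'a \<Rightarrow> 'b::comm_monoid_add"
  shows "(\<Sum>v\<in>UNIV. g (v + c)) = (\<Sum>u\<in>UNIV. g u)"
  by (rule sum.reindex_bij_witness[where i = "\<lambda>u. u - c" and j = "\<lambda>v. v + c"]) auto

definition trace_char :: "nat \<Rightarrow> 'a::field \<Rightarrow> int" where
  "trace_char n z = neg1_pow (tr n z)"

lemma trace_char_add:
  assumes "n \<ge> 1" and "card (UNIV :: 'a::{field,finite} set) = 2 ^ n"
  shows "trace_char n ((a::'a) + b) = trace_char n a * trace_char n b"
  using tr_eq_0_or_1[OF assms, of a] tr_eq_0_or_1[OF assms, of b]
    one_plus_one_eq_zero_if_card_power_two[OF assms]
  by (auto simp: trace_char_def neg1_pow_def tr_add_char2)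

lemma sum_trace_char_mult:
  assumes "n \<ge> 1" and "card (UNIV :: 'a::{field,finite} set) = 2 ^ n"
  shows "(\<Sum>v\<in>UNIV. trace_char n (v * (c::'a))) = (if c = 0 then 2 ^ n else 0)"
proof (cases "c = 0")
  case True
  then show ?thesis
    using assms(2) by (simp add: trace_char_def neg1_pow_def tr_def power_0_left)
next
  case False
  obtain u0 :: 'a where "tr n u0 \<noteq> 0"
    using tr_not_identically_zero[OF assms] by blast
  hence u0: "trace_char n u0 = -1"
    by (simp add: trace_char_def neg1_pow_def)
  have "(\<Sum>u\<in>(UNIV::'a set). trace_char n u) = (\<Sum>u\<in>UNIV. trace_char n (u + u0))"
    by (rule sum_UNIV_add_right_shift[symmetric])
  also have "\<dots> = - (\<Sum>u\<in>(UNIV::'a set). trace_char n u)"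
    by (simp add: trace_char_add[OF assms] u0 sum_negf)
  finally have "(\<Sum>u\<in>(UNIV::'a set). trace_char n u) = 0"
    by simp
  then show ?thesis
    using sum_UNIV_mult_right_shift[OF False, of "trace_char n"] False by simp
qed

lemma sum_square_trace_char_sum:
  fixes D :: "'b::finite \<Rightarrow> 'a::{field,finite}"
  assumes "n \<ge> 1" and "card (UNIV :: 'a set) = 2 ^ n"
  shows "(\<Sum>v\<in>UNIV. (\<Sum>x\<in>UNIV. trace_char n (v * D x))\<^sup>2)
    = 2 ^ n * (\<Sum>x\<in>UNIV. int (card {y. D y = D x}))"
proof -
  have c2: "(1::'a) + 1 = 0"
    by (rule one_plus_one_eq_zero_if_card_power_two[OF assms])
  have "(\<Sum>v\<in>UNIV. (\<Sum>x\<in>UNIV. trace_char n (v * D x))\<^sup>2)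
      = (\<Sum>v\<in>UNIV. \<Sum>x\<in>UNIV. \<Sum>y\<in>UNIV. trace_char n (v * (D x + D y)))"
    by (simp add: power2_eq_square sum_product trace_char_add[OF assms] distrib_left)
  also have "\<dots> = (\<Sum>x\<in>UNIV. \<Sum>y\<in>UNIV. \<Sum>v\<in>UNIV. trace_char n (v * (D x + D y)))"
    by (subst sum.swap, rule sum.cong[OF refl], rule sum.swap)
  also have "\<dots> = (\<Sum>x\<in>UNIV. \<Sum>y\<in>UNIV. if D y = D x then 2 ^ n else 0)"
  proof (intro sum.cong refl)
    fix x y
    have "D x + D y = 0 \<longleftrightarrow> D y = D x"
      using add_eq_0_iff_char2[OF c2] by metis
    then show "(\<Sum>v\<in>UNIV. trace_char n (v * (D x + D y))) = (if D y = D x then 2 ^ n else 0)"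
      by (simp only: sum_trace_char_mult[OF assms])
  qed
  also have "\<dots> = 2 ^ n * (\<Sum>x\<in>UNIV. int (card {y. D y = D x}))"
    by (simp add: sum.If_cases sum_distrib_left mult.commute)
  finally show ?thesis .
qed

subsection \<open>Secants of an o-polynomial\<close>

definition o_points :: "('a::field \<Rightarrow> 'a) \<Rightarrow> ('a \<times> 'a \<times> 'a) set" where
  "o_points F = (\<lambda>t. (1, t, F t)) ` UNIV \<union> {(0,1,0), (0,0,1)}"

lemma o_polynomial_det3_ne_0:
  assumes "o_polynomial F" and "p \<in> o_points F" and "q \<in> o_points F" and "r \<in> o_points F"
    and "p \<noteq> q" and "p \<noteq> r" and "q \<noteq> r"
  shows "det3 p q r \<noteq> 0"
proof -
  have no_three_collinear: "\<forall>p\<in>o_points F. \<forall>q\<in>o_points F. \<forall>r\<in>o_points F.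
      p \<noteq> q \<and> p \<noteq> r \<and> q \<noteq> r \<longrightarrow> det3 p q r \<noteq> 0"
    using assms(1) unfolding o_polynomial_def hyperoval_def o_points_def by (elim conjE)
  show ?thesis
    using no_three_collinear assms(2-) by simp
qed

lemma o_polynomial_inj:
  assumes "o_polynomial F"
  shows "inj F"
proof (rule injI, rule ccontr)
  fix y z assume "F y = F z" and "y \<noteq> z"
  have "det3 (1, y, F y) (1, z, F z) (0, 1, 0) \<noteq> 0"
    using \<open>y \<noteq> z\<close> by (intro o_polynomial_det3_ne_0[OF assms]) (auto simp: o_points_def)
  then show False
    using \<open>F y = F z\<close> by (simp add: det3_def)
qed

lemma o_polynomial_slope_inj_on:
  assumes "o_polynomial F"
  shows "inj_on (\<lambda>y. (F y - F x) / (y - x)) (- {x})"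
proof (rule inj_onI, rule ccontr)
  fix y z
  assume "y \<in> - {x}" "z \<in> - {x}" "y \<noteq> z"
    and "(F y - F x) / (y - x) = (F z - F x) / (z - x)"
  hence "(F y - F x) * (z - x) = (F z - F x) * (y - x)"
    by (simp add: field_simps)
  moreover have "det3 (1, x, F x) (1, y, F y) (1, z, F z) \<noteq> 0"
    using \<open>y \<in> - {x}\<close> \<open>z \<in> - {x}\<close> \<open>y \<noteq> z\<close>
    by (intro o_polynomial_det3_ne_0[OF assms]) (auto simp: o_points_def)
  ultimately show False
    by (simp add: det3_def algebra_simps)
qed

lemma difference_quotient_eq_iff:
  fixes F :: "'a::field \<Rightarrow> 'a"
  assumes "y \<noteq> x"
  shows "(F y - F x) / (y - x) = b \<longleftrightarrow> F y - b * y = F x - b * x"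
proof -
  have "(F y - F x) / (y - x) = b \<longleftrightarrow> F y - F x = b * (y - x)"
    using assms by (simp add: divide_eq_eq)
  also have "\<dots> \<longleftrightarrow> F y - b * y = F x - b * x"
    by (auto simp: algebra_simps)
  finally show ?thesis .
qed

text \<open>Pigeonhole: \<open>q - 1\<close> distinct nonzero slopes fill the \<open>q - 1\<close> nonzero values.\<close>
lemma o_polynomial_slope_surj:
  fixes F :: "'a::{field,finite} \<Rightarrow> 'a"
  assumes "o_polynomial F" and "b \<noteq> 0"
  shows "b \<in> (\<lambda>y. (F y - F x) / (y - x)) ` (- {x})"
proof -
  let ?slope = "\<lambda>y. (F y - F x) / (y - x)"
  have "?slope y \<noteq> 0" if "y \<noteq> x" for y
  proof -
    have "F y \<noteq> F x"
      using o_polynomial_inj[OF assms(1)] that by (auto dest: injD)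
    then show ?thesis
      using that by simp
  qed
  then have "?slope ` (- {x}) \<subseteq> - {0}"
    by (intro image_subsetI) simp
  moreover have "card (?slope ` (- {x})) = card (- {x})"
    by (rule card_image[OF o_polynomial_slope_inj_on[OF assms(1)]])
  moreover have "card (- {x}) = card (- {0::'a})"
    by (simp add: Compl_eq_Diff_UNIV card_Diff_singleton)
  ultimately have "?slope ` (- {x}) = - {0}"
    using card_subset_eq[of "- {0}" "?slope ` (- {x})"] by simp
  then show ?thesis
    using assms(2) by simp
qed

lemma o_polynomial_two_to_one:
  fixes F :: "'a::{field,finite} \<Rightarrow> 'a"
  assumes "o_polynomial F" and "b \<noteq> 0"
  shows "card {y. F y - b * y = F x - b * x} = 2"
proof -
  obtain y0 where "y0 \<noteq> x" and y0: "(F y0 - F x) / (y0 - x) = b"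
    using o_polynomial_slope_surj[OF assms, of x] by auto
  have "y = y0" if "y \<noteq> x" and "F y - b * y = F x - b * x" for y
  proof (rule inj_onD[OF o_polynomial_slope_inj_on[OF assms(1)]])
    show "(F y - F x) / (y - x) = (F y0 - F x) / (y0 - x)"
      using difference_quotient_eq_iff[OF that(1)] that(2) y0 by simp
  qed (use that \<open>y0 \<noteq> x\<close> in auto)
  moreover have "F y0 - b * y0 = F x - b * x"
    using y0 difference_quotient_eq_iff[OF \<open>y0 \<noteq> x\<close>] by blast
  ultimately have "{y. F y - b * y = F x - b * x} = {x, y0}"
    by auto
  then show ?thesis
    using \<open>y0 \<noteq> x\<close> by simp
qed

theorem mainTheorem6:
  fixes F :: "'a::{field,finite} \<Rightarrow> 'a" and n :: nat
  assumes "n \<ge> 1" and "card (UNIV :: 'a set) = 2 ^ n" and "o_polynomial F"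
  shows "\<forall>b. b \<noteq> 0 \<longrightarrow> (\<Sum>v\<in>UNIV. (walsh n F (b * v) v)\<^sup>2) = 2 ^ (2 * n + 1)"
proof (intro allI impI)
  fix b :: 'a assume "b \<noteq> 0"
  have c2: "(1::'a) + 1 = 0"
    by (rule one_plus_one_eq_zero_if_card_power_two[OF assms(1,2)])
  define D where "D x = F x + b * x" for x
  have "walsh n F (b * v) v = (\<Sum>x\<in>UNIV. trace_char n (v * D x))" for v
    unfolding walsh_def trace_char_def D_def tr_add_char2[OF c2, symmetric]
    by (simp add: algebra_simps)
  moreover have "card {y. D y = D x} = 2" for x
    using o_polynomial_two_to_one[OF assms(3) \<open>b \<noteq> 0\<close>, of x]
    by (simp only: D_def diff_eq_add_char2[OF c2])
  ultimately have "(\<Sum>v\<in>UNIV. (walsh n F (b * v) v)\<^sup>2) = 2 ^ n * (2 * 2 ^ n)"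
    using sum_square_trace_char_sum[OF assms(1,2), of D] assms(2) by simp
  also have "\<dots> = 2 ^ (2 * n + 1)"
    by (simp add: power_add mult.commute[of 2 n] power_mult power2_eq_square)
  finally show "(\<Sum>v\<in>UNIV. (walsh n F (b * v) v)\<^sup>2) = 2 ^ (2 * n + 1)" .
qed

end
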